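(* Let $n\ge1$, $s\in\{1,\dots,n\}$, let $C\in\mathbb{R}^{n\times n}$ be symmetric positive definite, and let $x\in[0,1]^n$ with $\sum_{i=1}^n x_i=s$. Let $0\le t_1\le t_2\le\lambda_{\min}(C)$, and let $\nu^{t_1}$ and $\mu^{t_2}$ be the vectors of eigenvalues of $M_{t_1}(x)$ and $M_{t_2}(x)$, respectively, sorted in nonincreasing order. Then: (i) $\mu^{t_2}+t_2\mathbb{I}_s\succ\nu^{t_1}+t_1\mathbb{I}_s$; (ii) $\sum_{i=1}^{\ell}\mu^{t_2}_i+(t_2-t_1)\sum_{i=1}^{\ell}x^\downarrow_i\ge\sum_{i=1}^{\ell}\nu^{t_1}_i$ for each $\ell\in\{1,\dots,s\}$; (iii) $\mu^{t_2}_i+t_2-t_1\ge\nu^{t_1}_i$ for each $i\in\{1,\dots,s\}$.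
   Context: $\lambda_{\min}(C)$ is the smallest eigenvalue of $C$. For $0\le t\le\lambda_{\min}(C)$ let $A(t)\in\mathbb{R}^{n\times n}$ be a Cholesky factor of $C-tI$ (so $C-tI=A(t)^\top A(t)$), with $i$-th column $a_i(t)$, and $M_t(x)=\sum_i x_i a_i(t)a_i(t)^\top$. $\mathbb{I}_s\in\mathbb{R}^n$ has first $s$ entries $1$ and the rest $0$. For a vector $y$, $y^\downarrow_i$ denotes its $i$-th largest entry. For $\mu,\nu\in\mathbb{R}^n$, $\mu\succ\nu$ ($\mu$ majorizes $\nu$) means $\sum_{i=1}^\ell\mu^\downarrow_i\ge\sum_{i=1}^\ell\nu^\downarrow_i$ for all $\ell\in\{1,\dots,n-1\}$ and $\sum_{i=1}^n\mu_i=\sum_{i=1}^n\nu_i$. *)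

theory Defs
  imports "Jordan_Normal_Form.Matrix" "Jordan_Normal_Form.Char_Poly"
begin

definition sym_pos_def_mat :: "nat \<Rightarrow> real mat \<Rightarrow> bool" where
  "sym_pos_def_mat n C \<longleftrightarrow> C \<in> carrier_mat n n \<and> transpose_mat C = C \<and>
     (\<forall>v \<in> carrier_vec n. v \<noteq> 0\<^sub>v n \<longrightarrow> v \<bullet> (C *\<^sub>v v) > 0)"

definition lambda_min :: "real mat \<Rightarrow> real" where
  "lambda_min C = Min {k. eigenvalue C k}"

definition cholesky_factor :: "nat \<Rightarrow> real mat \<Rightarrow> real mat \<Rightarrow> bool" where
  "cholesky_factor n A B \<longleftrightarrow> A \<in> carrier_mat n n \<and> upper_triangular A \<and>
     (\<forall>i<n. A $$ (i,i) \<ge> 0) \<and> B = transpose_mat A * A"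

definition outer :: "real vec \<Rightarrow> real mat" where
  "outer a = mat (dim_vec a) (dim_vec a) (\<lambda>(j,k). a $ j * a $ k)"

definition M_mat :: "nat \<Rightarrow> real mat \<Rightarrow> real vec \<Rightarrow> real mat" where
  "M_mat n A x = mat n n (\<lambda>(j,k). \<Sum>i<n. x $ i * (outer (col A i)) $$ (j,k))"

definition sorted_eigvals :: "real mat \<Rightarrow> real list \<Rightarrow> bool" where
  "sorted_eigvals B ev \<longleftrightarrow> length ev = dim_row B \<and> sorted_wrt (\<ge>) ev \<and>
     char_poly B = (\<Prod>a\<leftarrow>ev. [:- a, 1:])"

(* y\<down>: entries sorted nonincreasingly (so y\<down>_i = desc y ! (i-1)) *)
definition desc :: "real list \<Rightarrow> real list" where
  "desc y = rev (sort y)"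

definition ind_vec :: "nat \<Rightarrow> nat \<Rightarrow> real list" where
  "ind_vec n s = map (\<lambda>i. if i < s then 1 else 0) [0..<n]"

definition majorizes :: "real list \<Rightarrow> real list \<Rightarrow> bool" where
  "majorizes mu nu \<longleftrightarrow> length mu = length nu \<and>
     (\<forall>l \<in> {1..<length mu}. sum_list (take l (desc mu)) \<ge> sum_list (take l (desc nu))) \<and>
     sum_list mu = sum_list nu"

end

theory Submission
  imports Defs "Jordan_Normal_Form.Schur_Decomposition"
begin

(*
  Write D = Diag(sqrt x). Since M_t(x) = A_t Diag(x) A_t^T = (A_t D)(D A_t^T) and PQ, QP have
  the same characteristic polynomial, M_t(x) has the spectrum of B_t = D (C - t I) D, where
  A_t^T A_t = C - t I. The two matrices in question differ by a nonnegative diagonal matrix: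
  B_t1 = B_t2 + (t2 - t1) Diag(x).

  Expand the sum of the l largest eigenvalues of B_t1 in an orthonormal eigenbasis of B_t2.
  It becomes a weighted sum of the eigenvalues of B_t2 plus (t2 - t1) times a weighted sum of
  the x_i, and both weight vectors lie in the hypersimplex {V : 0 <= V <= 1, sum V = l}. A
  linear functional on the hypersimplex is maximised by the indicator of its l largest
  coefficients. This gives (ii), and also (i): there sum x = s and x <= 1, so the x-part is
  at most min l s, with equality of traces for l = n. Part (iii) is Weyl's inequality. Its
  proof uses a test vector spanned by the first i eigenvectors of B_t1 and orthogonal to
  the first i - 1 eigenvectors of B_t2.
*)

section \<open>Characteristic polynomials and the spectral theorem\<close>

lemma det_scalar_minus_mult_commute:
  fixes P Q :: "'a::idom mat"
  assumes P: "P \<in> carrier_mat n n" and Q: "Q \<in> carrier_mat n n" and c: "c \<noteq> 0"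
  shows "det (c \<cdot>\<^sub>m 1\<^sub>m n - P * Q) = det (c \<cdot>\<^sub>m 1\<^sub>m n - Q * P)"
proof -
  let ?X = "c \<cdot>\<^sub>m 1\<^sub>m n :: 'a mat" and ?I = "1\<^sub>m n :: 'a mat"
  have X: "?X \<in> carrier_mat n n" by simp
  have prod: "four_block_mat ?I (0\<^sub>m n n) (- Q) ?X * four_block_mat ?X P Q ?I
     = four_block_mat ?X P (0\<^sub>m n n) (?X - Q * P)"
  proof -
    have "Q * ?X = c \<cdot>\<^sub>m Q" and "?X * Q = c \<cdot>\<^sub>m Q"
      using mult_smult_distrib[OF Q one_carrier_mat] mult_smult_assoc_mat[OF one_carrier_mat Q] Q
      by simp_all
    then have "(- Q) * ?X + ?X * Q = 0\<^sub>m n n" using Q by simp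
    moreover have "(- Q) * P + ?X * ?I = ?X - Q * P"
      by (rule eq_matI) (use P Q in auto)
    ultimately show ?thesis
      using P Q X by (subst mult_four_block_mat[OF one_carrier_mat zero_carrier_mat
            uminus_carrier_mat[OF Q] X X P Q one_carrier_mat]) simp
  qed
  have "det (four_block_mat ?I (0\<^sub>m n n) (- Q) ?X) * det (four_block_mat ?X P Q ?I)
      = det (four_block_mat ?X P (0\<^sub>m n n) (?X - Q * P))"
    by (subst det_mult[symmetric, of _ "n + n"]) (use P Q X prod in auto)
  moreover have "det (four_block_mat ?I (0\<^sub>m n n) (- Q) ?X) = det ?X"
    using det_four_block_mat_upper_right_zero[OF one_carrier_mat refl _ X, of "- Q"] Q by simp
  moreover have "det (four_block_mat ?X P Q ?I) = det (?X - P * Q)"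
    using det_four_block_mat[OF X P Q one_carrier_mat] Q by simp
  moreover have "det (four_block_mat ?X P (0\<^sub>m n n) (?X - Q * P)) = det ?X * det (?X - Q * P)"
    using X P Q by (intro det_four_block_mat_lower_left_zero) auto
  moreover have "det ?X \<noteq> 0" using c by simp
  ultimately show ?thesis by (metis mult_left_cancel)
qed

lemma char_poly_mult_commute:
  fixes P Q :: "'a::field mat"
  assumes P: "P \<in> carrier_mat n n" and Q: "Q \<in> carrier_mat n n"
  shows "char_poly (P * Q) = char_poly (Q * P)"
proof -
  have "char_poly (R * S) = det ([:0, 1:] \<cdot>\<^sub>m 1\<^sub>m n - map_mat (\<lambda>a. [:a:]) R * map_mat (\<lambda>a. [:a:]) S)"
    if "R \<in> carrier_mat n n" "S \<in> carrier_mat n n" for R S :: "'a mat"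
    unfolding char_poly_defs map_poly_mult(1)[OF that, symmetric]
    using that by (intro arg_cong[of _ _ det] eq_matI) auto
  then show ?thesis
    using det_scalar_minus_mult_commute[of "map_mat (\<lambda>a. [:a:]) P" n "map_mat (\<lambda>a. [:a:]) Q" "[:0, 1:]"]
      P Q by simp
qed

lemma orthonormal_basis_with_first:
  fixes v :: "real vec"
  assumes v: "v \<in> carrier_vec n" and v0: "v \<noteq> 0\<^sub>v n"
  obtains W where "W \<in> carrier_mat n n" "transpose_mat W * W = 1\<^sub>m n"
    "col W 0 = (1 / sqrt (v \<bullet> v)) \<cdot>\<^sub>v v"
proof -
  interpret cof_vec_space n "TYPE(real)" .
  define b where "b = basis_completion v"
  define ws where "ws = gram_schmidt n b"
  define W where "W = mat_of_cols n (map (\<lambda>w. (1 / sqrt (w \<bullet> w)) \<cdot>\<^sub>v w) ws)"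
  from basis_completion[OF v v0, folded b_def]
  have b: "set b \<subseteq> carrier_vec n" "distinct b" "\<not> lin_dep (set b)" "hd b = v" "length b = n"
    by auto
  have n: "n \<noteq> 0" using v v0 by (auto intro!: eq_vecI)
  with b obtain vs where bv: "b = v # vs" by (cases b) auto
  from gram_schmidt_result[OF b(1-3) refl, folded ws_def]
  have ws: "set ws \<subseteq> carrier_vec n" "corthogonal ws" "length ws = n" by (auto simp: b(5))
  have hd_ws: "hd ws = v" using gram_schmidt_hd[OF v, of vs] unfolding ws_def bv .
  have ws_carrier: "ws ! i \<in> carrier_vec n" if "i < n" for i using ws that by auto
  have orth: "ws ! i \<bullet> ws ! j = 0 \<longleftrightarrow> i \<noteq> j" if "i < n" "j < n" for i j
    using ws(2,3) that unfolding corthogonal_def by auto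
  have pos: "ws ! i \<bullet> ws ! i > 0" if "i < n" for i
    using orth[OF that that] conjugate_square_ge_0_vec[of "ws ! i"] by (simp add: less_le)
  have W: "W \<in> carrier_mat n n" unfolding W_def using ws(3) by (simp add: mat_of_cols_def carrier_matI)
  have col_W: "col W i = (1 / sqrt (ws ! i \<bullet> ws ! i)) \<cdot>\<^sub>v ws ! i" if "i < n" for i
    unfolding W_def using ws ws_carrier that by auto
  have "transpose_mat W * W = 1\<^sub>m n"
  proof (rule eq_matI)
    fix i j assume "i < dim_row (1\<^sub>m n)" "j < dim_col (1\<^sub>m n)"
    then have i: "i < n" and j: "j < n" by auto
    have "(transpose_mat W * W) $$ (i, j)
        = (1 / sqrt (ws ! i \<bullet> ws ! i)) * (1 / sqrt (ws ! j \<bullet> ws ! j)) * (ws ! i \<bullet> ws ! j)"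
      using i j W col_W ws_carrier[OF i] ws_carrier[OF j] by simp
    also have "\<dots> = 1\<^sub>m n $$ (i, j)"
      using orth[OF i j] pos[OF i] i j by (cases "i = j") (auto simp: real_sqrt_mult[symmetric])
    finally show "(transpose_mat W * W) $$ (i, j) = 1\<^sub>m n $$ (i, j)" .
  qed (use W in auto)
  moreover have "col W 0 = (1 / sqrt (v \<bullet> v)) \<cdot>\<^sub>v v"
    using col_W[of 0] n hd_ws ws(3) by (cases ws) auto
  ultimately show ?thesis using W that by blast
qed

lemma symmetric_four_block_of_first_col:
  fixes A :: "'a::comm_ring_1 mat"
  assumes A: "A \<in> carrier_mat (Suc m) (Suc m)" and sym: "transpose_mat A = A"
    and col0: "\<forall>i<Suc m. A $$ (i, 0) = (if i = 0 then e else 0)"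
  defines "A' \<equiv> mat m m (\<lambda>(i, j). A $$ (Suc i, Suc j))"
  shows "A = four_block_mat (mat 1 1 (\<lambda>_. e)) (0\<^sub>m 1 m) (0\<^sub>m m 1) A'"
    and "transpose_mat A' = A'"
proof -
  have entry_sym: "A $$ (j, i) = A $$ (i, j)" if "i < Suc m" "j < Suc m" for i j
    using arg_cong[OF sym, of "\<lambda>M. M $$ (i, j)"] A that by simp
  show "A = four_block_mat (mat 1 1 (\<lambda>_. e)) (0\<^sub>m 1 m) (0\<^sub>m m 1) A'"
    by (rule eq_matI) (use A col0 entry_sym[of 0] in \<open>auto simp: A'_def Suc_pred\<close>)
  show "transpose_mat A' = A'"
    by (rule eq_matI) (auto simp: A'_def entry_sym)
qed

lemma orthogonal_conj_eigenvector_col: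
  fixes B W :: "real mat"
  assumes B: "B \<in> carrier_mat n n" and W: "W \<in> carrier_mat n n"
    and WTW: "transpose_mat W * W = 1\<^sub>m n"
    and eigen: "B *\<^sub>v col W 0 = e \<cdot>\<^sub>v col W 0" and i: "i < n"
  shows "(transpose_mat W * B * W) $$ (i, 0) = (if i = 0 then e else 0)"
proof -
  have "(transpose_mat W * B * W) $$ (i, 0) = col W i \<bullet> col (B * W) 0"
    using i W B by (simp add: assoc_mult_mat[of _ n n _ n _ n])
  also have "\<dots> = e * (col W i \<bullet> col W 0)"
    using col_mult2[OF B W, of 0] eigen i W by simp
  also have "col W i \<bullet> col W 0 = (transpose_mat W * W) $$ (i, 0)"
    using W i by simp
  finally show ?thesis unfolding WTW using W i by simp
qed

lemma symmetric_deflation: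
  fixes B :: "real mat"
  assumes B: "B \<in> carrier_mat (Suc m) (Suc m)" and sym: "transpose_mat B = B"
    and ev: "eigenvalue B e"
  obtains W B' where "W \<in> carrier_mat (Suc m) (Suc m)" "transpose_mat W * W = 1\<^sub>m (Suc m)"
    "B' \<in> carrier_mat m m" "transpose_mat B' = B'"
    "transpose_mat W * B * W = four_block_mat (mat 1 1 (\<lambda>_. e)) (0\<^sub>m 1 m) (0\<^sub>m m 1) B'"
proof -
  let ?n = "Suc m"
  define v where "v = find_eigenvector B e"
  have v: "v \<in> carrier_vec ?n" "v \<noteq> 0\<^sub>v ?n" "B *\<^sub>v v = e \<cdot>\<^sub>v v"
    using find_eigenvector[OF B ev] B unfolding v_def eigenvector_def by auto
  obtain W where W: "W \<in> carrier_mat ?n ?n" and WTW: "transpose_mat W * W = 1\<^sub>m ?n"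
    and W0: "col W 0 = (1 / sqrt (v \<bullet> v)) \<cdot>\<^sub>v v"
    using orthonormal_basis_with_first[OF v(1,2)] by blast
  define A where "A = transpose_mat W * B * W"
  define B' where "B' = mat m m (\<lambda>(i, j). A $$ (Suc i, Suc j))"
  have A: "A \<in> carrier_mat ?n ?n" unfolding A_def using W B by auto
  have eigen: "B *\<^sub>v col W 0 = e \<cdot>\<^sub>v col W 0"
    unfolding W0 using mult_mat_vec[OF B v(1)] v(3) by (simp add: smult_smult_assoc mult.commute)
  have "transpose_mat A = A"
    unfolding A_def using W B sym
    by (simp add: transpose_mult[of _ ?n ?n _ ?n] assoc_mult_mat[of _ ?n ?n _ ?n _ ?n])
  moreover have "\<forall>i<?n. A $$ (i, 0) = (if i = 0 then e else 0)"
    unfolding A_def using orthogonal_conj_eigenvector_col[OF B W WTW eigen] by blast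
  ultimately have "A = four_block_mat (mat 1 1 (\<lambda>_. e)) (0\<^sub>m 1 m) (0\<^sub>m m 1) B'"
    and "transpose_mat B' = B'"
    using symmetric_four_block_of_first_col[OF A, of e, folded B'_def] by blast+
  moreover have "B' \<in> carrier_mat m m" unfolding B'_def by simp
  ultimately show ?thesis using that[OF W WTW] unfolding A_def by blast
qed

lemma char_poly_orthogonal_four_block:
  fixes B W B' :: "real mat"
  assumes W: "W \<in> carrier_mat (Suc m) (Suc m)" and WTW: "transpose_mat W * W = 1\<^sub>m (Suc m)"
    and B: "B \<in> carrier_mat (Suc m) (Suc m)" and B': "B' \<in> carrier_mat m m"
    and WBW: "transpose_mat W * B * W = four_block_mat (mat 1 1 (\<lambda>_. e)) (0\<^sub>m 1 m) (0\<^sub>m m 1) B'"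
  shows "char_poly B = [:- e, 1:] * char_poly B'"
proof -
  have "W * transpose_mat W = 1\<^sub>m (Suc m)"
    using mat_mult_left_right_inverse[OF _ W WTW] W by auto
  then have "similar_mat (transpose_mat W * B * W) B"
    unfolding similar_mat_def
    by (intro exI[of _ "transpose_mat W"] exI[of _ W] similar_mat_witI[of _ _ "Suc m"])
      (use WTW B W in auto)
  then have "char_poly B = char_poly (transpose_mat W * B * W)"
    by (simp add: char_poly_similar)
  also have "\<dots> = char_poly (mat 1 1 (\<lambda>_. e)) * char_poly B'"
    unfolding WBW by (rule char_poly_four_block_zeros_col) (use B' in auto)
  also have "char_poly (mat 1 1 (\<lambda>_. e)) = [:- e, 1:]"
    by (simp add: char_poly_defs det_def sign_def)
  finally show ?thesis .
qed

lemma orthogonal_four_block_diagonalization: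
  fixes B W B' U' :: "real mat"
  assumes W: "W \<in> carrier_mat (Suc m) (Suc m)" and WTW: "transpose_mat W * W = 1\<^sub>m (Suc m)"
    and B: "B \<in> carrier_mat (Suc m) (Suc m)" and B': "B' \<in> carrier_mat m m"
    and WBW: "transpose_mat W * B * W = four_block_mat (mat 1 1 (\<lambda>_. e)) (0\<^sub>m 1 m) (0\<^sub>m m 1) B'"
    and U': "U' \<in> carrier_mat m m" "transpose_mat U' * U' = 1\<^sub>m m"
    and U'B'U': "transpose_mat U' * B' * U' = mat_diag m (\<lambda>k. es ! k)"
  shows "\<exists>U \<in> carrier_mat (Suc m) (Suc m). transpose_mat U * U = 1\<^sub>m (Suc m) \<and>
           transpose_mat U * B * U = mat_diag (Suc m) (\<lambda>k. (e # es) ! k)"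
proof -
  let ?n = "Suc m" and ?E = "mat 1 1 (\<lambda>_. e)"
  define V where "V = four_block_mat (1\<^sub>m 1) (0\<^sub>m 1 m) (0\<^sub>m m 1) U'"
  have V: "V \<in> carrier_mat ?n ?n" unfolding V_def using U' by auto
  have VT: "transpose_mat V = four_block_mat (1\<^sub>m 1) (0\<^sub>m 1 m) (0\<^sub>m m 1) (transpose_mat U')"
    unfolding V_def using U' by (subst transpose_four_block_mat) auto
  have "transpose_mat V * V = 1\<^sub>m ?n"
    unfolding VT unfolding V_def using U' by (subst mult_four_block_mat[of _ 1 1 _ m _ m]) auto
  moreover have "transpose_mat V * (transpose_mat W * B * W) * V = mat_diag ?n (\<lambda>k. (e # es) ! k)"
  proof -
    have "transpose_mat V * (transpose_mat W * B * W)
        = four_block_mat ?E (0\<^sub>m 1 m) (0\<^sub>m m 1) (transpose_mat U' * B')"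
      unfolding WBW VT using U' B' by (subst mult_four_block_mat[of _ 1 1 _ m _ m]) auto
    also have "\<dots> * V = four_block_mat ?E (0\<^sub>m 1 m) (0\<^sub>m m 1) (transpose_mat U' * B' * U')"
      unfolding V_def using U' B' by (subst mult_four_block_mat[of _ 1 1 _ m _ m]) auto
    also have "\<dots> = mat_diag ?n (\<lambda>k. (e # es) ! k)"
      unfolding U'B'U' by (auto intro!: eq_matI simp: mat_diag_def)
    finally show ?thesis .
  qed
  moreover have "transpose_mat (W * V) * (W * V) = transpose_mat V * (transpose_mat W * W) * V"
    and "transpose_mat (W * V) * B * (W * V) = transpose_mat V * (transpose_mat W * B * W) * V"
    using W V B by (simp_all add: transpose_mult[OF W V] assoc_mult_mat[of _ ?n ?n _ ?n _ ?n])
  ultimately show ?thesis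
    using W V unfolding WTW by (intro bexI[of _ "W * V"]) auto
qed

lemma symmetric_orthogonal_diagonalization:
  fixes B :: "real mat"
  assumes "B \<in> carrier_mat n n" "transpose_mat B = B" "char_poly B = (\<Prod>a\<leftarrow>es. [:- a, 1:])"
  shows "\<exists>U \<in> carrier_mat n n. transpose_mat U * U = 1\<^sub>m n \<and>
           transpose_mat U * B * U = mat_diag n (\<lambda>k. es ! k)"
  using assms
proof (induction es arbitrary: n B)
  case Nil
  then have "n = 0" using degree_monic_char_poly[of B n] by simp
  then show ?case by (intro bexI[of _ "1\<^sub>m 0"]) (auto intro!: eq_matI simp: mat_diag_def)
next
  case (Cons e es n B)
  have ev: "eigenvalue B e"
    using Cons.prems unfolding eigenvalue_root_char_poly[OF Cons.prems(1)] by simp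
  then obtain m where n: "n = Suc m"
    using eigenvalue_imp_nonzero_dim[OF Cons.prems(1)] by (cases n) auto
  with Cons.prems have B: "B \<in> carrier_mat (Suc m) (Suc m)" "transpose_mat B = B" by auto
  obtain W B' where W: "W \<in> carrier_mat (Suc m) (Suc m)" "transpose_mat W * W = 1\<^sub>m (Suc m)"
    and B': "B' \<in> carrier_mat m m" "transpose_mat B' = B'"
    and WBW: "transpose_mat W * B * W = four_block_mat (mat 1 1 (\<lambda>_. e)) (0\<^sub>m 1 m) (0\<^sub>m m 1) B'"
    using symmetric_deflation[OF B ev] by blast
  have "[:- e, 1:] * char_poly B' = [:- e, 1:] * (\<Prod>a\<leftarrow>es. [:- a, 1:])"
    using char_poly_orthogonal_four_block[OF W B(1) B'(1) WBW] Cons.prems(3)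
    by (metis list.map(2) prod_list.Cons)
  then have "char_poly B' = (\<Prod>a\<leftarrow>es. [:- a, 1:])"
    by (rule mult_left_cancel[THEN iffD1, rotated]) simp
  then obtain U' where "U' \<in> carrier_mat m m" "transpose_mat U' * U' = 1\<^sub>m m"
    "transpose_mat U' * B' * U' = mat_diag m (\<lambda>k. es ! k)"
    using Cons.IH[OF B'] by blast
  then show ?case
    unfolding n by (rule orthogonal_four_block_diagonalization[OF W B(1) B'(1) WBW])
qed

lemma symmetric_spectral_decomposition:
  fixes B :: "real mat"
  assumes B: "B \<in> carrier_mat n n" and "transpose_mat B = B"
    and "char_poly B = (\<Prod>a\<leftarrow>es. [:- a, 1:])"
  obtains u :: "nat \<Rightarrow> nat \<Rightarrow> real" where
    "\<forall>i<n. \<forall>j<n. (\<Sum>k<n. u i k * u j k) = (if i = j then 1 else 0)"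
    "\<forall>i<n. \<forall>j<n. (\<Sum>k<n. u k i * u k j) = (if i = j then 1 else 0)"
    "\<forall>i<n. \<forall>j<n. B $$ (i, j) = (\<Sum>k<n. u i k * es ! k * u j k)"
proof -
  obtain U where U: "U \<in> carrier_mat n n" and UTU: "transpose_mat U * U = 1\<^sub>m n"
    and UBU: "transpose_mat U * B * U = mat_diag n (\<lambda>k. es ! k)"
    using symmetric_orthogonal_diagonalization[OF assms] by blast
  have UUT: "U * transpose_mat U = 1\<^sub>m n"
    using mat_mult_left_right_inverse[OF _ U UTU] U by auto
  have "B = (U * transpose_mat U) * B * (U * transpose_mat U)" unfolding UUT using B by simp
  also have "\<dots> = U * (transpose_mat U * B * U) * transpose_mat U"
    using U B by (simp add: assoc_mult_mat[of _ n n _ n _ n])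
  finally have B_eq: "B = U * mat_diag n (\<lambda>k. es ! k) * transpose_mat U" unfolding UBU .
  define u where "u i k = U $$ (i, k)" for i k
  have "(\<Sum>k<n. u i k * u j k) = (if i = j then 1 else 0)" if "i < n" "j < n" for i j
    using arg_cong[OF UUT, of "\<lambda>M. M $$ (i, j)"] U that
    by (simp add: u_def scalar_prod_def lessThan_atLeast0)
  moreover have "(\<Sum>k<n. u k i * u k j) = (if i = j then 1 else 0)" if "i < n" "j < n" for i j
    using arg_cong[OF UTU, of "\<lambda>M. M $$ (i, j)"] U that
    by (simp add: u_def scalar_prod_def lessThan_atLeast0)
  moreover have "B $$ (i, j) = (\<Sum>k<n. u i k * es ! k * u j k)" if "i < n" "j < n" for i j
    using arg_cong[OF B_eq, of "\<lambda>M. M $$ (i, j)"] U that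
    by (simp add: mat_diag_mult_right[OF U] u_def scalar_prod_def lessThan_atLeast0)
  ultimately show ?thesis using that by blast
qed

section \<open>Finite sums and sorted lists\<close>

lemma quadratic_form_eigenbasis:
  fixes w :: "nat \<Rightarrow> nat \<Rightarrow> real" and f y :: "nat \<Rightarrow> real"
  shows "(\<Sum>i<n. \<Sum>j<n. y i * (\<Sum>k<n. w i k * f k * w j k) * y j)
       = (\<Sum>k<n. f k * (\<Sum>i<n. w i k * y i)\<^sup>2)"
proof -
  have "(\<Sum>i<n. \<Sum>j<n. y i * (\<Sum>k<n. w i k * f k * w j k) * y j)
      = (\<Sum>i<n. \<Sum>j<n. \<Sum>k<n. y i * (w i k * f k * w j k) * y j)"
    by (simp add: sum_distrib_left sum_distrib_right)
  also have "\<dots> = (\<Sum>i<n. \<Sum>k<n. \<Sum>j<n. y i * (w i k * f k * w j k) * y j)"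
    by (rule sum.cong[OF refl], rule sum.swap)
  also have "\<dots> = (\<Sum>k<n. \<Sum>i<n. \<Sum>j<n. y i * (w i k * f k * w j k) * y j)"
    by (rule sum.swap)
  also have "\<dots> = (\<Sum>k<n. f k * (\<Sum>i<n. w i k * y i)\<^sup>2)"
    by (simp add: power2_eq_square sum_product sum_distrib_left mult_ac)
  finally show ?thesis .
qed

lemma orthonormal_coordinates_norm:
  fixes g :: "nat \<Rightarrow> nat \<Rightarrow> real" and y :: "nat \<Rightarrow> real"
  assumes "\<forall>i<n. \<forall>j<n. (\<Sum>k<n. g i k * g j k) = (if i = j then 1 else 0)"
  shows "(\<Sum>k<n. (\<Sum>i<n. g i k * y i)\<^sup>2) = (\<Sum>i<n. (y i)\<^sup>2)"
proof -
  have "(\<Sum>k<n. (\<Sum>i<n. g i k * y i)\<^sup>2)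
      = (\<Sum>i<n. \<Sum>j<n. y i * (\<Sum>k<n. g i k * 1 * g j k) * y j)"
    using quadratic_form_eigenbasis[of y g "\<lambda>_. 1" n] by simp
  also have "\<dots> = (\<Sum>i<n. \<Sum>j<n. if j = i then (y i)\<^sup>2 else 0)"
    using assms by (intro sum.cong refl) (auto simp: power2_eq_square)
  finally show ?thesis by simp
qed

lemma sum_mult_sum_swap:
  fixes h a :: "nat \<Rightarrow> real" and g :: "nat \<Rightarrow> nat \<Rightarrow> real"
  shows "(\<Sum>i<n. h i * (\<Sum>k<n. g i k * a k)) = (\<Sum>k<n. (\<Sum>i<n. h i * g i k) * a k)"
proof -
  have "(\<Sum>i<n. h i * (\<Sum>k<n. g i k * a k)) = (\<Sum>i<n. \<Sum>k<n. h i * g i k * a k)"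
    by (simp add: sum_distrib_left mult.assoc)
  also have "\<dots> = (\<Sum>k<n. \<Sum>i<n. h i * g i k * a k)"
    by (rule sum.swap)
  also have "\<dots> = (\<Sum>k<n. (\<Sum>i<n. h i * g i k) * a k)"
    by (simp add: sum_distrib_right)
  finally show ?thesis .
qed

lemma exists_nonzero_supported_solution:
  fixes q :: "nat \<Rightarrow> nat \<Rightarrow> real"
  assumes p: "p < n"
  obtains a where "\<forall>k<n. p < k \<longrightarrow> a k = 0" and "0 < (\<Sum>k<n. (a k)\<^sup>2)"
    and "\<forall>m<p. (\<Sum>k<n. q m k * a k) = 0"
proof -
  \<comment> \<open>p equations in the p + 1 unknowns a 0, ..., a p: a square system padded with a zero row\<close>
  define K where "K = mat\<^sub>r (Suc p) (Suc p)
    (\<lambda>i. if i = p then 0\<^sub>v (Suc p) else vec (Suc p) (\<lambda>k. q i k))"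
  have K: "K \<in> carrier_mat (Suc p) (Suc p)" unfolding K_def by simp
  have "det K = 0" unfolding K_def by (rule det_row_0) auto
  then obtain v where v: "v \<in> carrier_vec (Suc p)" "v \<noteq> 0\<^sub>v (Suc p)" "K *\<^sub>v v = 0\<^sub>v (Suc p)"
    using det_0_iff_vec_prod_zero_field[OF K] by blast
  define a where "a k = (if k < Suc p then v $ k else 0)" for k
  have restrict: "(\<Sum>k<n. g k * a k) = (\<Sum>k<Suc p. g k * v $ k)" for g
    unfolding a_def using p by (intro sum.mono_neutral_cong_right) auto
  obtain k where k: "k < Suc p" "v $ k \<noteq> 0"
    using v by (metis carrier_vecD eq_vecI index_zero_vec(1) index_zero_vec(2))
  have "0 < (\<Sum>k<Suc p. v $ k * v $ k)"
    by (rule sum_pos2[of _ k]) (use k in \<open>auto simp: zero_less_mult_iff linorder_neq_iff\<close>)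
  moreover have "(\<Sum>k<n. (a k)\<^sup>2) = (\<Sum>k<Suc p. v $ k * v $ k)"
    using restrict[of a] unfolding power2_eq_square a_def by simp
  moreover have "(\<Sum>k<n. q m k * a k) = 0" if "m < p" for m
  proof -
    have "(K *\<^sub>v v) $ m = (\<Sum>k<Suc p. q m k * v $ k)"
      using that v(1) unfolding K_def by (simp add: scalar_prod_def lessThan_atLeast0)
    moreover have "(K *\<^sub>v v) $ m = 0" unfolding v(3) using that by simp
    ultimately show ?thesis using restrict[of "q m"] by linarith
  qed
  ultimately show ?thesis using that[of a] unfolding a_def by auto
qed

lemma sum_list_take_eq_sum_nth:
  fixes xs :: "'a::comm_monoid_add list"
  assumes "l \<le> length xs"
  shows "sum_list (take l xs) = (\<Sum>k<l. xs ! k)"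
  using assms by (simp add: sum_list_sum_nth lessThan_atLeast0 min_def)

lemma sum_list_map_upt_eq_sum:
  fixes f :: "nat \<Rightarrow> 'a::comm_monoid_add"
  shows "sum_list (map f [0..<n]) = (\<Sum>i<n. f i)"
  by (simp add: interv_sum_list_conv_sum_set_nat atLeast_upt)

lemma sorted_desc: "sorted_wrt (\<ge>) (desc ys)"
  unfolding desc_def by (simp add: sorted_wrt_rev)

lemma desc_eq_self_if_sorted:
  assumes "sorted_wrt (\<ge>) ys"
  shows "desc ys = ys"
proof -
  have "sorted (rev ys)" using assms by (simp add: sorted_wrt_rev)
  then have "sort ys = rev ys" by (intro properties_for_sort) auto
  then show ?thesis unfolding desc_def by simp
qed

lemma sum_list_map_desc:
  fixes g :: "real \<Rightarrow> 'a::comm_monoid_add"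
  shows "sum_list (map g (desc ys)) = sum_list (map g ys)"
proof -
  have "mset (desc ys) = mset ys" unfolding desc_def by simp
  then have "sum_mset (image_mset g (mset (desc ys))) = sum_mset (image_mset g (mset ys))" by simp
  then show ?thesis by (simp add: sum_mset_sum_list[symmetric])
qed

lemma sorted_wrt_ge_nth_mono:
  fixes ys :: "'a::order list"
  assumes "sorted_wrt (\<ge>) ys" "i \<le> j" "j < length ys"
  shows "ys ! j \<le> ys ! i"
  using assms sorted_wrt_nth_less[of "(\<ge>)" ys i j] by (cases "i = j") auto

lemma nth_mult_sum_le_weighted_sum:
  fixes e :: "real list" and g :: "nat \<Rightarrow> real"
  assumes "sorted_wrt (\<ge>) e" and "p < length e" and "\<forall>k<length e. 0 \<le> g k"
    and "\<forall>k<length e. p < k \<longrightarrow> g k = 0"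
  shows "e ! p * (\<Sum>k<length e. g k) \<le> (\<Sum>k<length e. e ! k * g k)"
  unfolding sum_distrib_left
proof (rule sum_mono)
  fix k assume "k \<in> {..<length e}"
  then show "e ! p * g k \<le> e ! k * g k"
    using assms sorted_wrt_ge_nth_mono[OF assms(1), of k p]
    by (cases "k \<le> p") (auto intro: mult_right_mono)
qed

lemma weighted_sum_le_nth_mult_sum:
  fixes e :: "real list" and g :: "nat \<Rightarrow> real"
  assumes "sorted_wrt (\<ge>) e" and "\<forall>k<length e. 0 \<le> g k" and "\<forall>k<p. g k = 0"
  shows "(\<Sum>k<length e. e ! k * g k) \<le> e ! p * (\<Sum>k<length e. g k)"
  unfolding sum_distrib_left
proof (rule sum_mono)
  fix k assume "k \<in> {..<length e}"
  then show "e ! k * g k \<le> e ! p * g k"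
    using assms sorted_wrt_ge_nth_mono[OF assms(1), of p k]
    by (cases "p \<le> k") (auto intro: mult_right_mono)
qed

section \<open>Linear functionals on the hypersimplex\<close>

definition hypersimplex :: "nat \<Rightarrow> nat \<Rightarrow> (nat \<Rightarrow> real) set" where
  "hypersimplex n l = {V. (\<forall>i<n. 0 \<le> V i \<and> V i \<le> 1) \<and> (\<Sum>i<n. V i) = real l}"

lemma hypersimplex_dim_le:
  assumes "V \<in> hypersimplex n l"
  shows "l \<le> n"
proof -
  have "(\<Sum>i<n. V i) \<le> (\<Sum>i<n. 1)"
    using assms unfolding hypersimplex_def by (intro sum_mono) auto
  then have "real l \<le> real n"
    using assms unfolding hypersimplex_def by simp
  then show ?thesis by simp
qed

lemma sum_max_sub_nth_eq_take_sum:
  fixes ds :: "real list"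
  assumes sorted: "sorted_wrt (\<ge>) ds" and l: "l \<le> length ds"
  shows "(\<Sum>k<length ds. max (ds ! k - ds ! (l - 1)) 0) = sum_list (take l ds) - real l * ds ! (l - 1)"
proof -
  let ?c = "ds ! (l - 1)"
  have "max (ds ! k - ?c) 0 = (if k < l then ds ! k - ?c else 0)" if "k < length ds" for k
  proof (cases "k < l")
    case True
    then have "?c \<le> ds ! k" using sorted_wrt_ge_nth_mono[OF sorted, of k "l - 1"] l by auto
    with True show ?thesis by simp
  next
    case False
    then have "ds ! k \<le> ?c" using sorted_wrt_ge_nth_mono[OF sorted, of "l - 1" k] that by auto
    with False show ?thesis by simp
  qed
  then have "(\<Sum>k<length ds. max (ds ! k - ?c) 0) = (\<Sum>k<length ds. if k < l then ds ! k - ?c else 0)"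
    by (intro sum.cong refl) auto
  also have "\<dots> = (\<Sum>k<l. ds ! k - ?c)"
    using l by (intro sum.mono_neutral_cong_right) auto
  also have "\<dots> = sum_list (take l ds) - real l * ?c"
    using l by (simp add: sum_subtractf sum_list_take_eq_sum_nth)
  finally show ?thesis .
qed

lemma weighted_sum_le_top_sum:
  fixes y :: "nat \<Rightarrow> real"
  assumes V: "V \<in> hypersimplex n l"
  shows "(\<Sum>i<n. y i * V i) \<le> sum_list (take l (desc (map y [0..<n])))"
proof -
  define ds where "ds = desc (map y [0..<n])"
  define c where "c = ds ! (l - 1)"
  have length_ds: "length ds = n" unfolding ds_def desc_def by simp
  have V01: "0 \<le> V i" "V i \<le> 1" if "i < n" for i
    using V that unfolding hypersimplex_def by auto
  \<comment> \<open>c is the l-th largest entry; bound y i by c plus the positive part of y i - c\<close>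
  have "(\<Sum>i<n. y i * V i) \<le> (\<Sum>i<n. c * V i + max (y i - c) 0)"
  proof (rule sum_mono)
    fix i assume "i \<in> {..<n}"
    then show "y i * V i \<le> c * V i + max (y i - c) 0"
      using V01[of i] mult_left_mono[of "V i" 1 "y i - c"] mult_right_mono[of "y i" c "V i"]
      by (cases "c \<le> y i") (auto simp: algebra_simps)
  qed
  also have "\<dots> = c * real l + (\<Sum>i<n. max (y i - c) 0)"
    using V unfolding hypersimplex_def by (simp add: sum.distrib sum_distrib_left[symmetric])
  also have "(\<Sum>i<n. max (y i - c) 0) = (\<Sum>k<n. max (ds ! k - c) 0)"
    using sum_list_map_desc[of "\<lambda>z. max (z - c) 0" "map y [0..<n]"]
      sum_list_map_upt_eq_sum[of "\<lambda>i. max (y i - c) 0" n]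
    using length_ds unfolding ds_def by (simp add: o_def sum_list_sum_nth lessThan_atLeast0)
  also have "\<dots> = sum_list (take l ds) - real l * c"
    using sum_max_sub_nth_eq_take_sum[OF sorted_desc[of "map y [0..<n]", folded ds_def]
        hypersimplex_dim_le[OF V, folded length_ds]] length_ds
    unfolding c_def by simp
  finally show ?thesis unfolding ds_def by simp
qed

lemma weighted_sum_le_min:
  fixes x :: "nat \<Rightarrow> real"
  assumes V: "V \<in> hypersimplex n l" and x: "\<forall>i<n. 0 \<le> x i \<and> x i \<le> 1"
  shows "(\<Sum>i<n. x i * V i) \<le> min (real l) (\<Sum>i<n. x i)"
proof -
  have "(\<Sum>i<n. x i * V i) \<le> (\<Sum>i<n. V i)"
    using V x unfolding hypersimplex_def by (intro sum_mono) (simp add: mult_left_le_one_le)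
  moreover have "(\<Sum>i<n. x i * V i) \<le> (\<Sum>i<n. x i)"
    using V x unfolding hypersimplex_def by (intro sum_mono) (simp add: mult_right_le_one_le)
  ultimately show ?thesis using V unfolding hypersimplex_def by simp
qed

lemma nth_add_indicator:
  assumes "length ys = n" and "k < n"
  shows "map2 (+) ys (map ((*) t) (ind_vec n s)) ! k = ys ! k + (if k < s then t else 0)"
  using assms by (simp add: ind_vec_def)

lemma length_add_indicator:
  "length ys = n \<Longrightarrow> length (map2 (+) ys (map ((*) t) (ind_vec n s))) = n"
  by (simp add: ind_vec_def)

lemma sorted_add_indicator:
  fixes ys :: "real list"
  assumes len: "length ys = n" and sorted: "sorted_wrt (\<ge>) ys" and t: "0 \<le> t"
  shows "sorted_wrt (\<ge>) (map2 (+) ys (map ((*) t) (ind_vec n s)))"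
  unfolding sorted_wrt_iff_nth_less length_add_indicator[OF len]
proof (intro allI impI)
  fix i j assume ij: "i < j" and j: "j < n"
  have "ys ! j \<le> ys ! i" using sorted_wrt_nth_less[OF sorted ij] j len by simp
  then show "map2 (+) ys (map ((*) t) (ind_vec n s)) ! j \<le> map2 (+) ys (map ((*) t) (ind_vec n s)) ! i"
    using ij j t by (simp add: nth_add_indicator[OF len])
qed

lemma sum_list_take_add_indicator:
  fixes ys :: "real list"
  assumes len: "length ys = n" and l: "l \<le> n"
  shows "sum_list (take l (map2 (+) ys (map ((*) t) (ind_vec n s))))
       = sum_list (take l ys) + t * real (min l s)"
proof -
  have "sum_list (take l (map2 (+) ys (map ((*) t) (ind_vec n s))))
      = (\<Sum>k<l. map2 (+) ys (map ((*) t) (ind_vec n s)) ! k)"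
    using l len by (intro sum_list_take_eq_sum_nth) (simp add: ind_vec_def)
  also have "\<dots> = (\<Sum>k<l. ys ! k + (if k < s then t else 0))"
    using l len by (intro sum.cong refl) (simp add: nth_add_indicator)
  also have "\<dots> = (\<Sum>k<l. ys ! k) + (\<Sum>k<l. if k < s then t else 0)"
    by (simp add: sum.distrib)
  also have "(\<Sum>k<l. if k < s then t else 0) = (\<Sum>k<min l s. t)"
    by (intro sum.mono_neutral_cong_right) auto
  finally show ?thesis using l len by (simp add: sum_list_take_eq_sum_nth)
qed

section \<open>Eigenvalues under a nonnegative diagonal perturbation\<close>

text \<open>Matrices are encoded entrywise as functions on indices below n. The k-th columns of the
  orthogonal matrices u and w are eigenvectors for nu ! k and mu ! k of B + d Diag(x) and of B,
  where B is the matrix on the right-hand side of perturbation.\<close>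

locale diagonal_perturbation =
  fixes n :: nat and u w :: "nat \<Rightarrow> nat \<Rightarrow> real" and nu mu :: "real list"
    and d :: real and x :: "nat \<Rightarrow> real"
  assumes length_nu: "length nu = n" and length_mu: "length mu = n"
    and sorted_nu: "sorted_wrt (\<ge>) nu" and sorted_mu: "sorted_wrt (\<ge>) mu"
    and u_rows: "\<forall>i<n. \<forall>j<n. (\<Sum>k<n. u i k * u j k) = (if i = j then 1 else 0)"
    and u_cols: "\<forall>i<n. \<forall>j<n. (\<Sum>k<n. u k i * u k j) = (if i = j then 1 else 0)"
    and w_rows: "\<forall>i<n. \<forall>j<n. (\<Sum>k<n. w i k * w j k) = (if i = j then 1 else 0)"
    and w_cols: "\<forall>i<n. \<forall>j<n. (\<Sum>k<n. w k i * w k j) = (if i = j then 1 else 0)"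
    and perturbation: "\<forall>i<n. \<forall>j<n. (\<Sum>k<n. u i k * nu ! k * u j k)
      = (\<Sum>k<n. w i k * mu ! k * w j k) + d * (if i = j then x i else 0)"
begin

lemma rayleigh_identity:
  "(\<Sum>k<n. nu ! k * (\<Sum>i<n. u i k * y i)\<^sup>2)
   = (\<Sum>k<n. mu ! k * (\<Sum>i<n. w i k * y i)\<^sup>2) + d * (\<Sum>i<n. x i * (y i)\<^sup>2)"
proof -
  have "(\<Sum>k<n. nu ! k * (\<Sum>i<n. u i k * y i)\<^sup>2)
      = (\<Sum>i<n. \<Sum>j<n. y i * (\<Sum>k<n. u i k * nu ! k * u j k) * y j)"
    by (rule quadratic_form_eigenbasis[symmetric])
  also have "\<dots> = (\<Sum>i<n. \<Sum>j<n. y i * (\<Sum>k<n. w i k * mu ! k * w j k) * y j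
                     + (if j = i then d * x i * (y i)\<^sup>2 else 0))"
    using perturbation by (intro sum.cong refl) (auto simp: algebra_simps power2_eq_square)
  also have "\<dots> = (\<Sum>i<n. \<Sum>j<n. y i * (\<Sum>k<n. w i k * mu ! k * w j k) * y j)
      + d * (\<Sum>i<n. x i * (y i)\<^sup>2)"
    by (simp add: sum.distrib sum_distrib_left mult.assoc)
  also have "(\<Sum>i<n. \<Sum>j<n. y i * (\<Sum>k<n. w i k * mu ! k * w j k) * y j)
      = (\<Sum>k<n. mu ! k * (\<Sum>i<n. w i k * y i)\<^sup>2)"
    by (rule quadratic_form_eigenbasis)
  finally show ?thesis .
qed

lemma eigenvalue_expansion:
  assumes k: "k < n"
  shows "nu ! k = (\<Sum>m<n. mu ! m * (\<Sum>i<n. w i m * u i k)\<^sup>2) + d * (\<Sum>i<n. x i * (u i k)\<^sup>2)"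
proof -
  have "(\<Sum>m<n. nu ! m * (\<Sum>i<n. u i m * u i k)\<^sup>2) = (\<Sum>m<n. if m = k then nu ! k else 0)"
    using u_cols k by (intro sum.cong refl) auto
  then show ?thesis using rayleigh_identity[of "\<lambda>i. u i k"] k by simp
qed

lemma partial_sum_expansion:
  assumes l: "l \<le> n"
  shows "sum_list (take l nu) = (\<Sum>m<n. mu ! m * (\<Sum>k<l. (\<Sum>i<n. w i m * u i k)\<^sup>2))
     + d * (\<Sum>i<n. x i * (\<Sum>k<l. (u i k)\<^sup>2))"
proof -
  have "sum_list (take l nu) = (\<Sum>k<l. nu ! k)"
    using l length_nu by (simp add: sum_list_take_eq_sum_nth)
  also have "\<dots> = (\<Sum>k<l. (\<Sum>m<n. mu ! m * (\<Sum>i<n. w i m * u i k)\<^sup>2)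
      + d * (\<Sum>i<n. x i * (u i k)\<^sup>2))"
    using eigenvalue_expansion l by (intro sum.cong refl) auto
  also have "\<dots> = (\<Sum>k<l. \<Sum>m<n. mu ! m * (\<Sum>i<n. w i m * u i k)\<^sup>2)
      + d * (\<Sum>k<l. \<Sum>i<n. x i * (u i k)\<^sup>2)"
    by (simp add: sum.distrib sum_distrib_left)
  also have "(\<Sum>k<l. \<Sum>m<n. mu ! m * (\<Sum>i<n. w i m * u i k)\<^sup>2)
      = (\<Sum>m<n. \<Sum>k<l. mu ! m * (\<Sum>i<n. w i m * u i k)\<^sup>2)"
    by (rule sum.swap)
  also have "(\<Sum>k<l. \<Sum>i<n. x i * (u i k)\<^sup>2) = (\<Sum>i<n. \<Sum>k<l. x i * (u i k)\<^sup>2)"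
    by (rule sum.swap)
  finally show ?thesis by (simp add: sum_distrib_left)
qed

lemma overlap_weight_total:
  assumes "m < n"
  shows "(\<Sum>k<n. (\<Sum>i<n. w i m * u i k)\<^sup>2) = 1"
proof -
  have "(\<Sum>k<n. (\<Sum>i<n. u i k * w i m)\<^sup>2) = (\<Sum>i<n. (w i m)\<^sup>2)"
    using u_rows by (rule orthonormal_coordinates_norm)
  then show ?thesis using w_cols assms by (simp add: mult.commute power2_eq_square)
qed

lemma overlap_weights_in_hypersimplex:
  assumes l: "l \<le> n"
  shows "(\<lambda>m. \<Sum>k<l. (\<Sum>i<n. w i m * u i k)\<^sup>2) \<in> hypersimplex n l"
proof -
  have "(\<Sum>k<l. (\<Sum>i<n. w i m * u i k)\<^sup>2) \<le> 1" if "m < n" for m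
  proof -
    have "(\<Sum>k<l. (\<Sum>i<n. w i m * u i k)\<^sup>2) \<le> (\<Sum>k<n. (\<Sum>i<n. w i m * u i k)\<^sup>2)"
      using l by (intro sum_mono2) auto
    then show ?thesis using overlap_weight_total[OF that] by simp
  qed
  moreover have "(\<Sum>m<n. \<Sum>k<l. (\<Sum>i<n. w i m * u i k)\<^sup>2) = real l"
  proof -
    have "(\<Sum>m<n. \<Sum>k<l. (\<Sum>i<n. w i m * u i k)\<^sup>2) = (\<Sum>k<l. \<Sum>m<n. (\<Sum>i<n. w i m * u i k)\<^sup>2)"
      by (rule sum.swap)
    also have "\<dots> = (\<Sum>k<l. \<Sum>i<n. (u i k)\<^sup>2)"
      using w_rows by (intro sum.cong refl orthonormal_coordinates_norm)
    also have "\<dots> = (\<Sum>k<l. 1)"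
      using u_cols l by (intro sum.cong refl) (auto simp: power2_eq_square)
    finally show ?thesis by simp
  qed
  ultimately show ?thesis unfolding hypersimplex_def by (auto intro: sum_nonneg)
qed

lemma eigenvector_weights_in_hypersimplex:
  assumes l: "l \<le> n"
  shows "(\<lambda>i. \<Sum>k<l. (u i k)\<^sup>2) \<in> hypersimplex n l"
proof -
  have "(\<Sum>k<l. (u i k)\<^sup>2) \<le> 1" if "i < n" for i
  proof -
    have "(\<Sum>k<l. (u i k)\<^sup>2) \<le> (\<Sum>k<n. (u i k)\<^sup>2)"
      using l by (intro sum_mono2) auto
    then show ?thesis using u_rows that by (simp add: power2_eq_square)
  qed
  moreover have "(\<Sum>i<n. \<Sum>k<l. (u i k)\<^sup>2) = real l"
  proof -
    have "(\<Sum>i<n. \<Sum>k<l. (u i k)\<^sup>2) = (\<Sum>k<l. \<Sum>i<n. (u i k)\<^sup>2)"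
      by (rule sum.swap)
    also have "\<dots> = (\<Sum>k<l. 1)"
      using u_cols l by (intro sum.cong refl) (auto simp: power2_eq_square)
    finally show ?thesis by simp
  qed
  ultimately show ?thesis unfolding hypersimplex_def by (auto intro: sum_nonneg)
qed

lemma partial_sum_le_weighted:
  assumes l: "l \<le> n"
  obtains V where "V \<in> hypersimplex n l"
    and "sum_list (take l nu) \<le> sum_list (take l mu) + d * (\<Sum>i<n. x i * V i)"
proof -
  have "desc (map (\<lambda>m. mu ! m) [0..<n]) = mu"
    using length_mu sorted_mu by (simp add: map_nth[of mu, unfolded length_mu] desc_eq_self_if_sorted)
  then have "(\<Sum>m<n. mu ! m * (\<Sum>k<l. (\<Sum>i<n. w i m * u i k)\<^sup>2)) \<le> sum_list (take l mu)"
    using weighted_sum_le_top_sum[OF overlap_weights_in_hypersimplex[OF l], of "\<lambda>m. mu ! m"]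
    by simp
  then have "sum_list (take l nu) \<le> sum_list (take l mu) + d * (\<Sum>i<n. x i * (\<Sum>k<l. (u i k)\<^sup>2))"
    using partial_sum_expansion[OF l] by linarith
  then show ?thesis by (rule that[OF eigenvector_weights_in_hypersimplex[OF l]])
qed

lemma sum_eigenvalues_eq: "sum_list nu = sum_list mu + d * (\<Sum>i<n. x i)"
proof -
  have "sum_list nu = (\<Sum>m<n. mu ! m * (\<Sum>k<n. (\<Sum>i<n. w i m * u i k)\<^sup>2))
      + d * (\<Sum>i<n. x i * (\<Sum>k<n. (u i k)\<^sup>2))"
    using partial_sum_expansion[of n] length_nu by simp
  also have "\<dots> = (\<Sum>m<n. mu ! m) + d * (\<Sum>i<n. x i)"
    using overlap_weight_total u_rows by (simp add: power2_eq_square)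
  also have "(\<Sum>m<n. mu ! m) = sum_list mu"
    using sum_list_take_eq_sum_nth[of n mu] length_mu by simp
  finally show ?thesis .
qed

lemma exists_weyl_test_vector:
  assumes p: "p < n"
  obtains y where "0 < (\<Sum>i<n. (y i)\<^sup>2)"
    and "\<forall>k<n. p < k \<longrightarrow> (\<Sum>i<n. u i k * y i) = 0"
    and "\<forall>m<p. (\<Sum>i<n. w i m * y i) = 0"
proof -
  obtain a where a_supp: "\<forall>k<n. p < k \<longrightarrow> a k = 0" and a_pos: "0 < (\<Sum>k<n. (a k)\<^sup>2)"
    and a_orth: "\<forall>m<p. (\<Sum>k<n. (\<Sum>i<n. w i m * u i k) * a k) = 0"
    using exists_nonzero_supported_solution[OF p, of "\<lambda>m k. \<Sum>i<n. w i m * u i k"] by blast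
  define y where "y i = (\<Sum>k<n. u i k * a k)" for i
  have a_coord: "(\<Sum>i<n. u i k * y i) = a k" if "k < n" for k
  proof -
    have "(\<Sum>i<n. u i k * y i) = (\<Sum>j<n. (\<Sum>i<n. u i k * u i j) * a j)"
      unfolding y_def by (rule sum_mult_sum_swap)
    also have "\<dots> = (\<Sum>j<n. if j = k then a k else 0)"
      using u_cols that by (intro sum.cong refl) auto
    finally show ?thesis using that by simp
  qed
  have "(\<Sum>i<n. (y i)\<^sup>2) = (\<Sum>k<n. (a k)\<^sup>2)"
    using orthonormal_coordinates_norm[OF u_rows, of y] a_coord by simp
  moreover have "(\<Sum>i<n. w i m * y i) = 0" if "m < p" for m
    using a_orth that unfolding y_def sum_mult_sum_swap by simp
  ultimately show ?thesis
    by (intro that[of y]) (use a_pos a_supp a_coord in auto)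
qed

lemma weyl_nth_le:
  assumes p: "p < n" and d: "0 \<le> d" and x_le_1: "\<forall>i<n. x i \<le> 1"
  shows "nu ! p \<le> mu ! p + d"
proof -
  obtain y where S_pos: "0 < (\<Sum>i<n. (y i)\<^sup>2)"
    and a_supp: "\<forall>k<n. p < k \<longrightarrow> (\<Sum>i<n. u i k * y i) = 0"
    and c_zero: "\<forall>m<p. (\<Sum>i<n. w i m * y i) = 0"
    using exists_weyl_test_vector[OF p] by blast
  define S where "S = (\<Sum>i<n. (y i)\<^sup>2)"
  have a_norm: "(\<Sum>k<n. (\<Sum>i<n. u i k * y i)\<^sup>2) = S"
    and c_norm: "(\<Sum>m<n. (\<Sum>i<n. w i m * y i)\<^sup>2) = S"
    unfolding S_def using u_rows w_rows by (simp_all add: orthonormal_coordinates_norm)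
  have "nu ! p * S \<le> (\<Sum>k<n. nu ! k * (\<Sum>i<n. u i k * y i)\<^sup>2)"
    using nth_mult_sum_le_weighted_sum[OF sorted_nu, of p "\<lambda>k. (\<Sum>i<n. u i k * y i)\<^sup>2"]
      length_nu p a_supp a_norm by auto
  also have "\<dots> = (\<Sum>m<n. mu ! m * (\<Sum>i<n. w i m * y i)\<^sup>2) + d * (\<Sum>i<n. x i * (y i)\<^sup>2)"
    by (rule rayleigh_identity)
  also have "\<dots> \<le> mu ! p * S + d * S"
  proof (rule add_mono)
    show "(\<Sum>m<n. mu ! m * (\<Sum>i<n. w i m * y i)\<^sup>2) \<le> mu ! p * S"
      using weighted_sum_le_nth_mult_sum[OF sorted_mu, of "\<lambda>m. (\<Sum>i<n. w i m * y i)\<^sup>2" p]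
        length_mu c_zero c_norm by auto
    have "(\<Sum>i<n. x i * (y i)\<^sup>2) \<le> (\<Sum>i<n. 1 * (y i)\<^sup>2)"
      using x_le_1 by (intro sum_mono mult_right_mono) auto
    then show "d * (\<Sum>i<n. x i * (y i)\<^sup>2) \<le> d * S"
      using d unfolding S_def by (simp add: mult_left_mono)
  qed
  finally have "nu ! p * S \<le> (mu ! p + d) * S" by (simp add: algebra_simps)
  then show ?thesis using S_pos unfolding S_def by simp
qed

lemma majorizes_add_indicator:
  assumes t: "0 \<le> t" and d: "0 \<le> d" and s: "s \<le> n"
    and x01: "\<forall>i<n. 0 \<le> x i \<and> x i \<le> 1" and x_sum: "(\<Sum>i<n. x i) = real s"
  shows "majorizes (map2 (+) mu (map ((*) (t + d)) (ind_vec n s)))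
                   (map2 (+) nu (map ((*) t) (ind_vec n s)))"
proof -
  let ?M = "map2 (+) mu (map ((*) (t + d)) (ind_vec n s))"
  let ?N = "map2 (+) nu (map ((*) t) (ind_vec n s))"
  have length_M: "length ?M = n" and length_N: "length ?N = n"
    using length_add_indicator length_mu length_nu by auto
  have "desc ?M = ?M" and "desc ?N = ?N"
    using sorted_add_indicator[OF length_mu sorted_mu] sorted_add_indicator[OF length_nu sorted_nu] t d
    by (simp_all add: desc_eq_self_if_sorted)
  moreover have "sum_list (take l ?N) \<le> sum_list (take l ?M)" if l: "l \<le> n" for l
  proof -
    obtain V where V: "V \<in> hypersimplex n l"
      and le: "sum_list (take l nu) \<le> sum_list (take l mu) + d * (\<Sum>i<n. x i * V i)"
      using partial_sum_le_weighted[OF l] .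
    have "d * (\<Sum>i<n. x i * V i) \<le> d * real (min l s)"
      using weighted_sum_le_min[OF V x01] x_sum d by (intro mult_left_mono) auto
    then show ?thesis
      using le sum_list_take_add_indicator[OF length_mu l] sum_list_take_add_indicator[OF length_nu l]
      by (simp add: algebra_simps)
  qed
  moreover have "sum_list ?M = sum_list ?N"
    using sum_list_take_add_indicator[OF length_mu order.refl, of "t + d" s]
      sum_list_take_add_indicator[OF length_nu order.refl, of t s]
      sum_eigenvalues_eq x_sum s length_M length_N length_mu length_nu
    by (simp add: algebra_simps)
  ultimately show ?thesis
    unfolding majorizes_def using length_M length_N by auto
qed

lemma partial_sum_le_top_sum:
  assumes l: "l \<le> n" and d: "0 \<le> d"
  shows "sum_list (take l nu) \<le> sum_list (take l mu) + d * sum_list (take l (desc (map x [0..<n])))"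
proof -
  obtain V where V: "V \<in> hypersimplex n l"
    and le: "sum_list (take l nu) \<le> sum_list (take l mu) + d * (\<Sum>i<n. x i * V i)"
    using partial_sum_le_weighted[OF l] .
  have "d * (\<Sum>i<n. x i * V i) \<le> d * sum_list (take l (desc (map x [0..<n])))"
    using weighted_sum_le_top_sum[OF V, of x] d by (rule mult_left_mono)
  with le show ?thesis by linarith
qed

end

section \<open>The matrices M_t(x)\<close>

lemma M_mat_eq_mult:
  fixes A :: "real mat" and x :: "real vec"
  assumes A: "A \<in> carrier_mat n n"
  shows "M_mat n A x = A * mat_diag n (\<lambda>i. x $ i) * transpose_mat A"
proof (rule eq_matI)
  fix j k assume "j < dim_row (A * mat_diag n (\<lambda>i. x $ i) * transpose_mat A)"
    and "k < dim_col (A * mat_diag n (\<lambda>i. x $ i) * transpose_mat A)"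
  then have j: "j < n" and k: "k < n" using A by auto
  show "M_mat n A x $$ (j, k) = (A * mat_diag n (\<lambda>i. x $ i) * transpose_mat A) $$ (j, k)"
    using A j k
    by (simp add: M_mat_def outer_def mat_diag_mult_right[OF A] scalar_prod_def lessThan_atLeast0 mult_ac)
qed (use A in \<open>auto simp: M_mat_def\<close>)

definition sqrt_diag_congruence :: "nat \<Rightarrow> real vec \<Rightarrow> real mat \<Rightarrow> real \<Rightarrow> real mat" where
  "sqrt_diag_congruence n x C t =
     mat_diag n (\<lambda>i. sqrt (x $ i)) * (C - t \<cdot>\<^sub>m 1\<^sub>m n) * mat_diag n (\<lambda>i. sqrt (x $ i))"

lemma sqrt_diag_congruence_carrier:
  "C \<in> carrier_mat n n \<Longrightarrow> sqrt_diag_congruence n x C t \<in> carrier_mat n n"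
  unfolding sqrt_diag_congruence_def by (auto intro!: mult_carrier_mat[of _ n n])

lemma index_sqrt_diag_congruence:
  assumes C: "C \<in> carrier_mat n n" and "i < n" "j < n"
  shows "sqrt_diag_congruence n x C t $$ (i, j)
       = sqrt (x $ i) * (C $$ (i, j) - (if i = j then t else 0)) * sqrt (x $ j)"
proof -
  have CI: "C - t \<cdot>\<^sub>m 1\<^sub>m n \<in> carrier_mat n n" using C by auto
  have "sqrt_diag_congruence n x C t
      = mat n n (\<lambda>(i, j). sqrt (x $ i) * (C - t \<cdot>\<^sub>m 1\<^sub>m n) $$ (i, j)) * mat_diag n (\<lambda>i. sqrt (x $ i))"
    unfolding sqrt_diag_congruence_def by (simp add: mat_diag_mult_left[OF CI])
  also have "\<dots> = mat n n (\<lambda>(i, j). sqrt (x $ i) * (C - t \<cdot>\<^sub>m 1\<^sub>m n) $$ (i, j) * sqrt (x $ j))"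
    by (subst mat_diag_mult_right[of _ n n]) auto
  finally show ?thesis using assms by simp
qed

lemma sqrt_diag_congruence_symmetric:
  assumes C: "C \<in> carrier_mat n n" "transpose_mat C = C"
  shows "transpose_mat (sqrt_diag_congruence n x C t) = sqrt_diag_congruence n x C t"
proof (rule eq_matI)
  fix i j assume "i < dim_row (sqrt_diag_congruence n x C t)" "j < dim_col (sqrt_diag_congruence n x C t)"
  then have i: "i < n" and j: "j < n" using sqrt_diag_congruence_carrier[OF C(1), of x t] by auto
  have "C $$ (j, i) = C $$ (i, j)" using arg_cong[OF C(2), of "\<lambda>M. M $$ (i, j)"] C(1) i j by simp
  then show "transpose_mat (sqrt_diag_congruence n x C t) $$ (i, j) = sqrt_diag_congruence n x C t $$ (i, j)"
    using sqrt_diag_congruence_carrier[OF C(1), of x t] i j by (auto simp: index_sqrt_diag_congruence[OF C(1)])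
qed (use sqrt_diag_congruence_carrier[OF C(1), of x t] in auto)

lemma char_poly_M_mat:
  fixes A C :: "real mat" and x :: "real vec"
  assumes chol: "cholesky_factor n A (C - t \<cdot>\<^sub>m 1\<^sub>m n)" and x0: "\<forall>i<n. 0 \<le> x $ i"
  shows "char_poly (M_mat n A x) = char_poly (sqrt_diag_congruence n x C t)"
proof -
  define D where "D = mat_diag n (\<lambda>i. sqrt (x $ i))"
  have A: "A \<in> carrier_mat n n" and AA: "C - t \<cdot>\<^sub>m 1\<^sub>m n = transpose_mat A * A"
    using chol unfolding cholesky_factor_def by auto
  have D: "D \<in> carrier_mat n n" unfolding D_def by simp
  have "mat_diag n (\<lambda>i. x $ i) = D * D"
    unfolding D_def mat_diag_diag by (rule eq_matI) (use x0 in \<open>auto simp: mat_diag_def\<close>)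
  then have "M_mat n A x = (A * D) * (D * transpose_mat A)"
    using M_mat_eq_mult[OF A] A D by (simp add: assoc_mult_mat[of _ n n _ n _ n])
  then have "char_poly (M_mat n A x) = char_poly ((D * transpose_mat A) * (A * D))"
    using char_poly_mult_commute[of "A * D" n "D * transpose_mat A"] A D by simp
  also have "(D * transpose_mat A) * (A * D) = sqrt_diag_congruence n x C t"
    unfolding sqrt_diag_congruence_def AA D_def[symmetric] using A D
    by (simp add: assoc_mult_mat[of _ n n _ n _ n])
  finally show ?thesis .
qed

lemma diagonal_perturbation_of_cholesky:
  fixes C A1 A2 :: "real mat" and x :: "real vec"
  assumes C: "C \<in> carrier_mat n n" "transpose_mat C = C" and x0: "\<forall>i<n. 0 \<le> x $ i"
    and chol1: "cholesky_factor n A1 (C - t1 \<cdot>\<^sub>m 1\<^sub>m n)"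
    and chol2: "cholesky_factor n A2 (C - t2 \<cdot>\<^sub>m 1\<^sub>m n)"
    and nu: "sorted_eigvals (M_mat n A1 x) nu" and mu: "sorted_eigvals (M_mat n A2 x) mu"
  obtains u w where "diagonal_perturbation n u w nu mu (t2 - t1) (\<lambda>i. x $ i)"
proof -
  let ?B = "sqrt_diag_congruence n x C"
  note B = sqrt_diag_congruence_carrier[OF C(1)] sqrt_diag_congruence_symmetric[OF C]
  have M_carrier: "M_mat n A x \<in> carrier_mat n n" for A unfolding M_mat_def by simp
  have nu': "length nu = n" "sorted_wrt (\<ge>) nu" "char_poly (?B t1) = (\<Prod>a\<leftarrow>nu. [:- a, 1:])"
    using nu M_carrier char_poly_M_mat[OF chol1 x0] unfolding sorted_eigvals_def by auto
  have mu': "length mu = n" "sorted_wrt (\<ge>) mu" "char_poly (?B t2) = (\<Prod>a\<leftarrow>mu. [:- a, 1:])"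
    using mu M_carrier char_poly_M_mat[OF chol2 x0] unfolding sorted_eigvals_def by auto
  obtain u where u: "\<forall>i<n. \<forall>j<n. (\<Sum>k<n. u i k * u j k) = (if i = j then 1 else 0)"
    "\<forall>i<n. \<forall>j<n. (\<Sum>k<n. u k i * u k j) = (if i = j then 1 else 0)"
    "\<forall>i<n. \<forall>j<n. ?B t1 $$ (i, j) = (\<Sum>k<n. u i k * nu ! k * u j k)"
    using symmetric_spectral_decomposition[OF B nu'(3)] by blast
  obtain w where w: "\<forall>i<n. \<forall>j<n. (\<Sum>k<n. w i k * w j k) = (if i = j then 1 else 0)"
    "\<forall>i<n. \<forall>j<n. (\<Sum>k<n. w k i * w k j) = (if i = j then 1 else 0)"
    "\<forall>i<n. \<forall>j<n. ?B t2 $$ (i, j) = (\<Sum>k<n. w i k * mu ! k * w j k)"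
    using symmetric_spectral_decomposition[OF B mu'(3)] by blast
  have "?B t1 $$ (i, j) = ?B t2 $$ (i, j) + (t2 - t1) * (if i = j then x $ i else 0)"
    if "i < n" "j < n" for i j
    using that x0 by (auto simp: index_sqrt_diag_congruence[OF C(1)] algebra_simps)
  then have "diagonal_perturbation n u w nu mu (t2 - t1) (\<lambda>i. x $ i)"
    using nu' mu' u w by unfold_locales auto
  then show ?thesis by (rule that)
qed

theorem lemma1:
  fixes n s :: nat and C A1 A2 :: "real mat" and x :: "real vec"
    and t1 t2 :: real and nu mu :: "real list"
  assumes "n \<ge> 1" and "s \<in> {1..n}"
    and "sym_pos_def_mat n C"
    and "x \<in> carrier_vec n" and "\<forall>i<n. 0 \<le> x $ i \<and> x $ i \<le> 1"
    and "(\<Sum>i<n. x $ i) = real s"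
    and "0 \<le> t1" and "t1 \<le> t2" and "t2 \<le> lambda_min C"
    and "cholesky_factor n A1 (C - t1 \<cdot>\<^sub>m 1\<^sub>m n)"
    and "cholesky_factor n A2 (C - t2 \<cdot>\<^sub>m 1\<^sub>m n)"
    and "sorted_eigvals (M_mat n A1 x) nu"
    and "sorted_eigvals (M_mat n A2 x) mu"
  shows "majorizes (map2 (+) mu (map ((*) t2) (ind_vec n s)))
                   (map2 (+) nu (map ((*) t1) (ind_vec n s))) \<and>
         (\<forall>l \<in> {1..s}. sum_list (take l mu) + (t2 - t1) * sum_list (take l (desc (list_of_vec x)))
                       \<ge> sum_list (take l nu)) \<and>
         (\<forall>i \<in> {1..s}. mu ! (i - 1) + t2 - t1 \<ge> nu ! (i - 1))"
proof -
  have C: "C \<in> carrier_mat n n" "transpose_mat C = C"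
    using assms(3) unfolding sym_pos_def_mat_def by auto
  obtain u w where "diagonal_perturbation n u w nu mu (t2 - t1) (\<lambda>i. x $ i)"
    using diagonal_perturbation_of_cholesky[OF C _ assms(10-13)] assms(5) by blast
  then interpret diagonal_perturbation n u w nu mu "t2 - t1" "\<lambda>i. x $ i" .
  have x_list: "list_of_vec x = map (\<lambda>i. x $ i) [0..<n]"
    using assms(4) by (simp add: list_of_vec_map)
  have "majorizes (map2 (+) mu (map ((*) t2) (ind_vec n s)))
                  (map2 (+) nu (map ((*) t1) (ind_vec n s)))"
    using majorizes_add_indicator[of t1 s] assms(2,5-8) by simp
  moreover have "\<forall>l \<in> {1..s}. sum_list (take l mu) + (t2 - t1) * sum_list (take l (desc (list_of_vec x)))
                       \<ge> sum_list (take l nu)"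
    using partial_sum_le_top_sum assms(2,8) x_list by auto
  moreover have "\<forall>i \<in> {1..s}. mu ! (i - 1) + t2 - t1 \<ge> nu ! (i - 1)"
  proof
    fix i assume "i \<in> {1..s}"
    then have "i - 1 < n" using assms(2) by auto
    then show "mu ! (i - 1) + t2 - t1 \<ge> nu ! (i - 1)"
      using weyl_nth_le assms(5,8) by fastforce
  qed
  ultimately show ?thesis by blast
qed

end
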